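(* Let $K=K_0\supset K_1\supset K_2\supset\cdots$ be a module with a decreasing filtration by submodules (with the convention $K_q=K_0$ for $q<0$), and for each integer $r\ge -1$ let $\partial_r:K\to K$ be a linear map with $\partial_r(K_p)\subset K_p$ for all $p$, $\partial_{-1}=0$, and $\partial_r\circ\partial_s=0$ for all $r,s\ge -1$. For $r\ge -1$ and integers $p$ put $Z^r_p=\{x\in K_p:\ \partial_r x\in K_{p+r}\}$. Assume the following property: for all $r\ge 0$ and all $p$, if $x\in Z^r_p$ or $x\in Z^{r-1}_p$, then $\partial_r x-\partial_{r-1}x\in Z^{r-1}_{p+r}$. Then $\partial_{r-1}\bigl(Z^{r-1}_{p-r+1}\bigr)\subset Z^r_p$ for all $r\ge 0$ and all $p\ge 0$.
   Context: The maps $\partial_r$ play the role of varying boundary operators converging in the filtration topology. *)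

theory Defs
  imports Complex_Main
begin

definition Zset :: "(int \<Rightarrow> 'k set) \<Rightarrow> (int \<Rightarrow> 'k \<Rightarrow> 'k) \<Rightarrow> int \<Rightarrow> int \<Rightarrow> 'k set" where
  "Zset Kf d r p = {x \<in> Kf p. d r x \<in> Kf (p + r)}"

end

theory Submission
  imports Defs
begin

lemma Zset_image_subset_Zset:
  assumes "d r \<circ> d s = (\<lambda>x. 0)" and "0 \<in> Kf (p + r)"
  shows "d s ` Zset Kf d s (p - s) \<subseteq> Zset Kf d r p"
proof
  fix y
  assume "y \<in> d s ` Zset Kf d s (p - s)"
  then obtain x where x: "x \<in> Zset Kf d s (p - s)" and y: "y = d s x"
    by blast
  have "y \<in> Kf p"
    using x y by (simp add: Zset_def)
  moreover have "d r y = 0"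
    using assms(1) y by (simp add: fun_eq_iff)
  ultimately show "y \<in> Zset Kf d r p"
    using assms(2) by (simp add: Zset_def)
qed

theorem mainTheorem3:
  fixes scale :: "'r::comm_ring_1 \<Rightarrow> 'k::ab_group_add \<Rightarrow> 'k"
    and Kf :: "int \<Rightarrow> 'k set"
    and d :: "int \<Rightarrow> 'k \<Rightarrow> 'k"
  assumes modK: "module scale"
    and sub: "\<And>p. module.subspace scale (Kf p)"
    and K0: "\<And>q. q \<le> 0 \<Longrightarrow> Kf q = UNIV"
    and dec: "\<And>p q. p \<le> q \<Longrightarrow> Kf q \<subseteq> Kf p"
    and lin: "\<And>r. r \<ge> -1 \<Longrightarrow> module_hom scale scale (d r)"
    and filt: "\<And>r p. r \<ge> -1 \<Longrightarrow> d r ` Kf p \<subseteq> Kf p"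
    and dm1: "d (-1) = (\<lambda>x. 0)"
    and sq: "\<And>r s. r \<ge> -1 \<Longrightarrow> s \<ge> -1 \<Longrightarrow> d r \<circ> d s = (\<lambda>x. 0)"
    and hyp: "\<And>r p x. r \<ge> 0 \<Longrightarrow> x \<in> Zset Kf d r p \<or> x \<in> Zset Kf d (r - 1) p \<Longrightarrow>
                 d r x - d (r - 1) x \<in> Zset Kf d (r - 1) (p + r)"
  shows "\<forall>r p. r \<ge> 0 \<longrightarrow> p \<ge> 0 \<longrightarrow> d (r - 1) ` Zset Kf d (r - 1) (p - r + 1) \<subseteq> Zset Kf d r p"
proof (intro allI impI)
  fix r p :: int
  assume "r \<ge> 0"
  then have "d r \<circ> d (r - 1) = (\<lambda>x. 0)"
    using sq by simp
  moreover have "0 \<in> Kf (p + r)"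
    using module.subspace_0[OF modK sub] .
  ultimately have "d (r - 1) ` Zset Kf d (r - 1) (p - (r - 1)) \<subseteq> Zset Kf d r p"
    by (rule Zset_image_subset_Zset)
  then show "d (r - 1) ` Zset Kf d (r - 1) (p - r + 1) \<subseteq> Zset Kf d r p"
    by (simp add: algebra_simps)
qed

end
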